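(* Let $\mathcal{C}\subseteq[1,k]$ be a minimal core. Then there exist words $v_1,\dots,v_m\in\Sigma^*$ and words $u_1,\dots,u_m$, with $u_j$ $v_j$-minimal for each $j$, such that $\mathcal{C}\subseteq\mathrm{supp}(u_1)\cup\dots\cup\mathrm{supp}(u_m)$; that is, there is a family of minimal sections covering $\mathcal{C}$.
   Context: Let $\mathcal{A}=\langle Q,\Sigma,\delta\rangle$ be a synchronizing automaton with $n$ states $q_1,\dots,q_n$. Each word acts linearly on $\mathbb{C}Q$ by $q\mapsto q\cdot u$, preserving $w^\perp=\{x:\langle x,q_1+\dots+q_n\rangle=0\}$; let $\rho:\Sigma^*\to\mathbb{M}_{n-1}(\mathbb{C})$ be the induced representation and $\mathcal{R}$ the $\mathbb{C}$-algebra generated by $\rho(\Sigma^* )$. Write $\mathcal{R}/\mathrm{Rad}(\mathcal{R})\cong\prod_{i=1}^k\mathbb{M}_{n_i}(\mathbb{C})$ (Jacobson radical, Wedderburn–Artin) and let $\theta_i:\Sigma^*\to\mathbb{M}_{n_i}(\mathbb{C})$ be $\rho$ followed by the quotient map and the $i$-th projection; $0_i$ is the zero matrix. The support of a word $z$ is $\mathrm{supp}(z)=\{i:\theta_i(z)\neq0_i\}$. For $v\in\Sigma^*$, a word $u\in\Sigma^*v\Sigma^*$ is $v$-minimal, and $\mathrm{supp}(u)$ is a minimal section, if $\mathrm{supp}(u)\neq\emptyset$ and there is no $z\in\Sigma^*v\Sigma^*$ with $\emptyset\neq\mathrm{supp}(z)\subsetneq\mathrm{supp}(u)$. A subset $T\subseteq[1,k]$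 is a core if every word $x$ with $\theta_i(x)=0_i$ for all $i\in T$ satisfies $\theta_i(x)=0_i$ for all $i\in[1,k]$; a minimal core is a core minimal with respect to inclusion. *)

theory Defs
  imports "Jordan_Normal_Form.Matrix"
begin

text \<open>Automaton: states are 0,...,n-1 (state q_{i+1} of the paper is i), alphabet Sigma,
 transition function delta. Words are lists over Sigma; the action of a word is foldl.\<close>

definition delta_star :: "(nat \<Rightarrow> 'a \<Rightarrow> nat) \<Rightarrow> nat \<Rightarrow> 'a list \<Rightarrow> nat" where
  "delta_star \<delta> q w = foldl \<delta> q w"

definition synchronizing_automaton :: "'a set \<Rightarrow> nat \<Rightarrow> (nat \<Rightarrow> 'a \<Rightarrow> nat) \<Rightarrow> bool" where
  "synchronizing_automaton \<Sigma> n \<delta> \<longleftrightarrow>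
     finite \<Sigma> \<and> n \<ge> 1 \<and> (\<forall>q<n. \<forall>a\<in>\<Sigma>. \<delta> q a < n) \<and>
     (\<exists>w\<in>lists \<Sigma>. \<forall>p<n. \<forall>q<n. delta_star \<delta> p w = delta_star \<delta> q w)"

text \<open>The representation rho on w-perp, written (row-vector convention, right action)
 in the basis b_j = q_j - q_{n-1}, j < n-1: b_j . u = (q_{j.u} - q_{n-1}) - (q_{(n-1).u} - q_{n-1}).\<close>

definition rho :: "nat \<Rightarrow> (nat \<Rightarrow> 'a \<Rightarrow> nat) \<Rightarrow> 'a list \<Rightarrow> complex mat" where
  "rho n \<delta> w = mat (n - 1) (n - 1)
     (\<lambda>(j, l). (if delta_star \<delta> j w = l then 1 else 0)
             - (if delta_star \<delta> (n - 1) w = l then 1 else 0))"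

inductive_set alg_gen :: "nat \<Rightarrow> complex mat set \<Rightarrow> complex mat set" for d S where
  gen: "x \<in> S \<Longrightarrow> x \<in> alg_gen d S"
| zero: "0\<^sub>m d d \<in> alg_gen d S"
| add: "x \<in> alg_gen d S \<Longrightarrow> y \<in> alg_gen d S \<Longrightarrow> x + y \<in> alg_gen d S"
| smult: "x \<in> alg_gen d S \<Longrightarrow> c \<cdot>\<^sub>m x \<in> alg_gen d S"
| mult: "x \<in> alg_gen d S \<Longrightarrow> y \<in> alg_gen d S \<Longrightarrow> x * y \<in> alg_gen d S"

definition alg_R :: "'a set \<Rightarrow> nat \<Rightarrow> (nat \<Rightarrow> 'a \<Rightarrow> nat) \<Rightarrow> complex mat set" where
  "alg_R \<Sigma> n \<delta> = alg_gen (n - 1) (rho n \<delta> ` lists \<Sigma>)"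

text \<open>Jacobson radical of a (unital) matrix algebra R: intersection of its maximal left ideals
 (R itself if there are none, i.e. for the zero algebra).\<close>

definition left_ideal :: "complex mat set \<Rightarrow> nat \<Rightarrow> complex mat set \<Rightarrow> bool" where
  "left_ideal R d L \<longleftrightarrow> L \<subseteq> R \<and> 0\<^sub>m d d \<in> L \<and>
     (\<forall>x\<in>L. \<forall>y\<in>L. x + y \<in> L) \<and> (\<forall>x\<in>L. - x \<in> L) \<and>
     (\<forall>r\<in>R. \<forall>x\<in>L. r * x \<in> L)"

definition maximal_left_ideal :: "complex mat set \<Rightarrow> nat \<Rightarrow> complex mat set \<Rightarrow> bool" where
  "maximal_left_ideal R d L \<longleftrightarrow> left_ideal R d L \<and> L \<noteq> R \<and>
     (\<forall>L'. left_ideal R d L' \<and> L \<subseteq> L' \<and> L' \<noteq> R \<longrightarrow> L' = L)"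

definition jacobson_radical :: "complex mat set \<Rightarrow> nat \<Rightarrow> complex mat set" where
  "jacobson_radical R d = R \<inter> \<Inter> {L. maximal_left_ideal R d L}"

text \<open>Wedderburn--Artin data: phi : R \<rightarrow> prod_{i<k} M_{ns i}(C) is a surjective unital
 C-algebra homomorphism with kernel Rad(R); it induces R/Rad(R) \<cong> prod_i M_{ns i}(C).
 Components are indexed by i < k (paper: i in [1,k]).\<close>

definition wedderburn_artin ::
  "'a set \<Rightarrow> nat \<Rightarrow> (nat \<Rightarrow> 'a \<Rightarrow> nat) \<Rightarrow> nat \<Rightarrow> (nat \<Rightarrow> nat) \<Rightarrow> (complex mat \<Rightarrow> nat \<Rightarrow> complex mat) \<Rightarrow> bool" where
  "wedderburn_artin \<Sigma> n \<delta> k ns \<phi> \<longleftrightarrow>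
     (let R = alg_R \<Sigma> n \<delta>; d = n - 1 in
     (\<forall>i<k. ns i \<ge> 1) \<and>
     (\<forall>x\<in>R. \<forall>i<k. \<phi> x i \<in> carrier_mat (ns i) (ns i)) \<and>
     (\<forall>x\<in>R. \<forall>y\<in>R. \<forall>i<k. \<phi> (x + y) i = \<phi> x i + \<phi> y i) \<and>
     (\<forall>x\<in>R. \<forall>c. \<forall>i<k. \<phi> (c \<cdot>\<^sub>m x) i = c \<cdot>\<^sub>m \<phi> x i) \<and>
     (\<forall>x\<in>R. \<forall>y\<in>R. \<forall>i<k. \<phi> (x * y) i = \<phi> x i * \<phi> y i) \<and>
     (\<forall>i<k. \<phi> (1\<^sub>m d) i = 1\<^sub>m (ns i)) \<and>
     (\<forall>f. (\<forall>i<k. f i \<in> carrier_mat (ns i) (ns i)) \<longrightarrow> (\<exists>x\<in>R. \<forall>i<k. \<phi> x i = f i)) \<and>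
     {x\<in>R. \<forall>i<k. \<phi> x i = 0\<^sub>m (ns i) (ns i)} = jacobson_radical R d)"

definition theta :: "nat \<Rightarrow> (nat \<Rightarrow> 'a \<Rightarrow> nat) \<Rightarrow> (complex mat \<Rightarrow> nat \<Rightarrow> complex mat) \<Rightarrow> nat \<Rightarrow> 'a list \<Rightarrow> complex mat" where
  "theta n \<delta> \<phi> i z = \<phi> (rho n \<delta> z) i"

definition supp :: "nat \<Rightarrow> (nat \<Rightarrow> 'a \<Rightarrow> nat) \<Rightarrow> nat \<Rightarrow> (nat \<Rightarrow> nat) \<Rightarrow> (complex mat \<Rightarrow> nat \<Rightarrow> complex mat) \<Rightarrow> 'a list \<Rightarrow> nat set" where
  "supp n \<delta> k ns \<phi> z = {i. i < k \<and> theta n \<delta> \<phi> i z \<noteq> 0\<^sub>m (ns i) (ns i)}"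

definition factor_words :: "'a set \<Rightarrow> 'a list \<Rightarrow> 'a list set" where
  "factor_words \<Sigma> v = {a @ v @ b | a b. a \<in> lists \<Sigma> \<and> b \<in> lists \<Sigma>}"

definition v_minimal ::
  "'a set \<Rightarrow> nat \<Rightarrow> (nat \<Rightarrow> 'a \<Rightarrow> nat) \<Rightarrow> nat \<Rightarrow> (nat \<Rightarrow> nat) \<Rightarrow> (complex mat \<Rightarrow> nat \<Rightarrow> complex mat) \<Rightarrow> 'a list \<Rightarrow> 'a list \<Rightarrow> bool" where
  "v_minimal \<Sigma> n \<delta> k ns \<phi> v u \<longleftrightarrow>
     u \<in> factor_words \<Sigma> v \<and> supp n \<delta> k ns \<phi> u \<noteq> {} \<and>
     \<not> (\<exists>z\<in>factor_words \<Sigma> v. supp n \<delta> k ns \<phi> z \<noteq> {} \<and> supp n \<delta> k ns \<phi> z \<subset> supp n \<delta> k ns \<phi> u)"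

definition is_core ::
  "'a set \<Rightarrow> nat \<Rightarrow> (nat \<Rightarrow> 'a \<Rightarrow> nat) \<Rightarrow> nat \<Rightarrow> (nat \<Rightarrow> nat) \<Rightarrow> (complex mat \<Rightarrow> nat \<Rightarrow> complex mat) \<Rightarrow> nat set \<Rightarrow> bool" where
  "is_core \<Sigma> n \<delta> k ns \<phi> T \<longleftrightarrow> T \<subseteq> {..<k} \<and>
     (\<forall>x\<in>lists \<Sigma>. (\<forall>i\<in>T. theta n \<delta> \<phi> i x = 0\<^sub>m (ns i) (ns i)) \<longrightarrow>
                   (\<forall>i<k. theta n \<delta> \<phi> i x = 0\<^sub>m (ns i) (ns i)))"

definition minimal_core ::
  "'a set \<Rightarrow> nat \<Rightarrow> (nat \<Rightarrow> 'a \<Rightarrow> nat) \<Rightarrow> nat \<Rightarrow> (nat \<Rightarrow> nat) \<Rightarrow> (complex mat \<Rightarrow> nat \<Rightarrow> complex mat) \<Rightarrow> nat set \<Rightarrow> bool" where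
  "minimal_core \<Sigma> n \<delta> k ns \<phi> T \<longleftrightarrow> is_core \<Sigma> n \<delta> k ns \<phi> T \<and>
     (\<forall>T'. T' \<subset> T \<longrightarrow> \<not> is_core \<Sigma> n \<delta> k ns \<phi> T')"

end

theory Submission
  imports Defs
begin

text \<open>For i in C, minimality of C gives a word x that vanishes on C - {i} but not on all
 components. Among the factor words a x b with nonempty support one with inclusion-minimal
 support, u, is x-minimal. Since theta is multiplicative, supp (a x b) is contained in supp x,
 and since C is a core, supp u meets C; the only point of C in supp x is i, so i lies in the
 minimal section supp u.\<close>

lemma delta_star_less:
  assumes "\<forall>q<n. \<forall>a\<in>\<Sigma>. \<delta> q a < n" and "w \<in> lists \<Sigma>" and "q < n"
  shows "delta_star \<delta> q w < n"
  using assms(2,3)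
proof (induction w arbitrary: q)
  case Nil
  then show ?case by (simp add: delta_star_def)
next
  case (Cons a w)
  then show ?case using assms(1) by (simp add: delta_star_def)
qed

lemma delta_star_append: "delta_star \<delta> q (a @ b) = delta_star \<delta> (delta_star \<delta> q a) b"
  by (simp add: delta_star_def)

lemma rho_append:
  assumes "\<forall>q<n. \<forall>a\<in>\<Sigma>. \<delta> q a < n" and "a \<in> lists \<Sigma>"
  shows "rho n \<delta> (a @ b) = rho n \<delta> a * rho n \<delta> b"
proof (rule eq_matI)
  let ?d = "n - 1"
  fix j l assume "j < dim_row (rho n \<delta> a * rho n \<delta> b)" and "l < dim_col (rho n \<delta> a * rho n \<delta> b)"
  then have jd: "j < ?d" and ld: "l < ?d" by (auto simp: rho_def)
  define p where "p = delta_star \<delta> j a"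
  define q where "q = delta_star \<delta> ?d a"
  define g where "g m = (if delta_star \<delta> m b = l then 1 else 0)
                        - (if delta_star \<delta> ?d b = l then 1 else (0::complex))" for m
  have "p < n" and "q < n"
    using delta_star_less[OF assms] jd by (auto simp: p_def q_def)
  then have p_cases: "p < ?d \<or> p = ?d" and q_cases: "q < ?d \<or> q = ?d" by linarith+
  have "(rho n \<delta> a * rho n \<delta> b) $$ (j, l) =
     (\<Sum>m<?d. ((if p = m then 1 else 0) - (if q = m then 1 else 0)) * g m)"
    using jd ld by (simp add: rho_def scalar_prod_def p_def q_def g_def atLeast0LessThan)
  also have "\<dots> = (\<Sum>m<?d. if p = m then g m else 0) - (\<Sum>m<?d. if q = m then g m else 0)"
    by (subst sum_subtractf[symmetric], rule sum.cong) auto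
  also have "\<dots> = g p - g q"
    using p_cases q_cases by (auto simp: g_def)
  also have "\<dots> = rho n \<delta> (a @ b) $$ (j, l)"
    using jd ld by (simp add: rho_def g_def p_def q_def delta_star_append)
  finally show "rho n \<delta> (a @ b) $$ (j, l) = (rho n \<delta> a * rho n \<delta> b) $$ (j, l)" by simp
qed (auto simp: rho_def)

lemma supp_factor_word_subset:
  assumes "\<forall>q<n. \<forall>a\<in>\<Sigma>. \<delta> q a < n" and "wedderburn_artin \<Sigma> n \<delta> k ns \<phi>"
    and "v \<in> lists \<Sigma>" and "z \<in> factor_words \<Sigma> v"
  shows "supp n \<delta> k ns \<phi> z \<subseteq> supp n \<delta> k ns \<phi> v"
proof
  fix i assume i: "i \<in> supp n \<delta> k ns \<phi> z"
  then have ik: "i < k" by (simp add: supp_def)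
  obtain a b where z: "z = a @ v @ b" and a: "a \<in> lists \<Sigma>" and b: "b \<in> lists \<Sigma>"
    using assms(4) by (auto simp: factor_words_def)
  define R where "R = alg_R \<Sigma> n \<delta>"
  have rho_in_R: "w \<in> lists \<Sigma> \<Longrightarrow> rho n \<delta> w \<in> R" for w
    by (simp add: R_def alg_R_def alg_gen.gen)
  have carrier: "\<forall>x\<in>R. \<phi> x i \<in> carrier_mat (ns i) (ns i)"
    and mult: "\<forall>x\<in>R. \<forall>y\<in>R. \<phi> (x * y) i = \<phi> x i * \<phi> y i"
    using assms(2) ik by (simp_all add: wedderburn_artin_def Let_def R_def)
  have "rho n \<delta> z = rho n \<delta> a * (rho n \<delta> v * rho n \<delta> b)"
    using z a assms(3) by (simp add: rho_append[OF assms(1)])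
  moreover have "rho n \<delta> v * rho n \<delta> b \<in> R"
    using rho_in_R[OF assms(3)] rho_in_R[OF b] by (simp add: R_def alg_R_def alg_gen.mult)
  ultimately have "\<phi> (rho n \<delta> z) i = \<phi> (rho n \<delta> a) i * (\<phi> (rho n \<delta> v) i * \<phi> (rho n \<delta> b) i)"
    using mult rho_in_R a b assms(3) by simp
  moreover have "\<phi> (rho n \<delta> a) i \<in> carrier_mat (ns i) (ns i)" "\<phi> (rho n \<delta> b) i \<in> carrier_mat (ns i) (ns i)"
    using carrier rho_in_R a b by blast+
  ultimately show "i \<in> supp n \<delta> k ns \<phi> v"
    using i ik by (auto simp: supp_def theta_def)
qed

lemma ex_v_minimal:
  assumes "v \<in> lists \<Sigma>" and "supp n \<delta> k ns \<phi> v \<noteq> {}"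
  shows "\<exists>u. v_minimal \<Sigma> n \<delta> k ns \<phi> v u"
proof -
  let ?S = "supp n \<delta> k ns \<phi>"
  let ?F = "{?S z | z. z \<in> factor_words \<Sigma> v \<and> ?S z \<noteq> {}}"
  have fin: "finite ?F"
    by (rule finite_subset[of _ "Pow {..<k}"]) (auto simp: supp_def)
  have "v \<in> factor_words \<Sigma> v"
    unfolding factor_words_def by (intro CollectI exI[of _ "[]"]) (simp add: assms(1))
  then have ne: "?F \<noteq> {}" using assms(2) by blast
  obtain T where T: "T \<in> ?F" and T_min: "\<forall>T'\<in>?F. T' \<subseteq> T \<longrightarrow> T = T'"
    using finite_has_minimal[OF fin ne] by (elim bexE)
  from T obtain u where u: "u \<in> factor_words \<Sigma> v" "?S u \<noteq> {}" and T_eq: "T = ?S u"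
    by blast
  have "\<not> (\<exists>z\<in>factor_words \<Sigma> v. ?S z \<noteq> {} \<and> ?S z \<subset> ?S u)"
    using T_min unfolding T_eq by blast
  with u show ?thesis unfolding v_minimal_def by blast
qed

lemma minimal_core_point_in_minimal_section:
  assumes "synchronizing_automaton \<Sigma> n \<delta>" and "wedderburn_artin \<Sigma> n \<delta> k ns \<phi>"
    and "minimal_core \<Sigma> n \<delta> k ns \<phi> C" and "i \<in> C"
  shows "\<exists>v u. v \<in> lists \<Sigma> \<and> v_minimal \<Sigma> n \<delta> k ns \<phi> v u \<and> i \<in> supp n \<delta> k ns \<phi> u"
proof -
  let ?S = "supp n \<delta> k ns \<phi>"
  have closed: "\<forall>q<n. \<forall>a\<in>\<Sigma>. \<delta> q a < n"
    using assms(1) by (simp add: synchronizing_automaton_def)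
  have core: "is_core \<Sigma> n \<delta> k ns \<phi> C" and "\<not> is_core \<Sigma> n \<delta> k ns \<phi> (C - {i})"
    using assms(3,4) by (auto simp: minimal_core_def)
  moreover have Ck: "C \<subseteq> {..<k}" using core by (simp add: is_core_def)
  ultimately obtain x where x: "x \<in> lists \<Sigma>"
    and "\<forall>j\<in>C - {i}. theta n \<delta> \<phi> j x = 0\<^sub>m (ns j) (ns j)"
    and "\<not> (\<forall>l<k. theta n \<delta> \<phi> l x = 0\<^sub>m (ns l) (ns l))"
    unfolding is_core_def by blast
  then have x_vanishes: "\<forall>j\<in>C - {i}. j \<notin> ?S x" and "?S x \<noteq> {}"
    by (auto simp: supp_def)
  then obtain u where u: "v_minimal \<Sigma> n \<delta> k ns \<phi> x u"
    using ex_v_minimal[OF x] by blast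
  then have "?S u \<subseteq> ?S x"
    using supp_factor_word_subset[OF closed assms(2) x] by (simp add: v_minimal_def)
  moreover obtain j where "j \<in> C" "j \<in> ?S u"
  proof -
    have "u \<in> lists \<Sigma>" "?S u \<noteq> {}"
      using u x by (auto simp: v_minimal_def factor_words_def)
    then have "\<not> (\<forall>j\<in>C. theta n \<delta> \<phi> j u = 0\<^sub>m (ns j) (ns j))"
      using core unfolding is_core_def supp_def by blast
    then show ?thesis using that Ck by (auto simp: supp_def)
  qed
  ultimately show ?thesis using x u x_vanishes by blast
qed

theorem mainTheorem8:
  fixes \<Sigma> :: "'a set" and n k :: nat and \<delta> :: "nat \<Rightarrow> 'a \<Rightarrow> nat"
    and ns :: "nat \<Rightarrow> nat" and \<phi> :: "complex mat \<Rightarrow> nat \<Rightarrow> complex mat" and C :: "nat set"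
  assumes "synchronizing_automaton \<Sigma> n \<delta>"
    and "wedderburn_artin \<Sigma> n \<delta> k ns \<phi>"
    and "minimal_core \<Sigma> n \<delta> k ns \<phi> C"
  shows "\<exists>(m::nat) vs us. (\<forall>j<m. vs j \<in> lists \<Sigma> \<and> v_minimal \<Sigma> n \<delta> k ns \<phi> (vs j) (us j))
                  \<and> C \<subseteq> (\<Union>j<m. supp n \<delta> k ns \<phi> (us j))"
proof (cases "C = {}")
  case True
  then show ?thesis by auto
next
  case False
  then obtain i0 where i0: "i0 \<in> C" by blast
  have "\<forall>i\<in>C. \<exists>v u. v \<in> lists \<Sigma> \<and> v_minimal \<Sigma> n \<delta> k ns \<phi> v u \<and> i \<in> supp n \<delta> k ns \<phi> u"
    using minimal_core_point_in_minimal_section[OF assms] by blast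
  then obtain V where "\<forall>i\<in>C. \<exists>u. V i \<in> lists \<Sigma> \<and> v_minimal \<Sigma> n \<delta> k ns \<phi> (V i) u
                                  \<and> i \<in> supp n \<delta> k ns \<phi> u"
    by (rule bchoice[THEN exE])
  then obtain U where VU: "\<forall>i\<in>C. V i \<in> lists \<Sigma> \<and> v_minimal \<Sigma> n \<delta> k ns \<phi> (V i) (U i)
                             \<and> i \<in> supp n \<delta> k ns \<phi> (U i)"
    by (rule bchoice[THEN exE])
  txt \<open>The cover is indexed by j < k; indices outside C repeat the section chosen for i0.\<close>
  define f where "f j = (if j \<in> C then j else i0)" for j
  have "f j \<in> C" for j using i0 by (simp add: f_def)
  then have "\<forall>j<k. V (f j) \<in> lists \<Sigma> \<and> v_minimal \<Sigma> n \<delta> k ns \<phi> (V (f j)) (U (f j))"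
    using VU by blast
  moreover have "C \<subseteq> (\<Union>j<k. supp n \<delta> k ns \<phi> (U (f j)))"
  proof
    fix i assume "i \<in> C"
    moreover have "C \<subseteq> {..<k}" using assms(3) by (simp add: minimal_core_def is_core_def)
    ultimately have "i < k" and "i \<in> supp n \<delta> k ns \<phi> (U (f i))" using VU by (auto simp: f_def)
    then show "i \<in> (\<Union>j<k. supp n \<delta> k ns \<phi> (U (f j)))" by blast
  qed
  ultimately show ?thesis
    by (intro exI[of _ k] exI[of _ "\<lambda>j. V (f j)"] exI[of _ "\<lambda>j. U (f j)"] conjI)
qed

end
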